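(* Let $n>1$ be an integer, let $\delta>0$ be a real number with $\delta\le (n-1)6^{-n}/c_6$ where $c_6=\sqrt3/8$, and let $M=\{(-2,\dots,-2)+\delta\mathbf z:\mathbf z\in\mathbb{Z}^{n-1}\}\subset\mathbb{R}^{n-1}$. Then $$\#(M\cap I'_{n-1})\le c_7\frac{4^{n-1}}{(n-1)!\,\delta^{n-1}},$$ where $c_7=(1+\sqrt3/162)^3$ and $I'_{n-1}=\{(x_1,\dots,x_{n-1})\in\mathbb{R}^{n-1}: -2\le x_1\le\cdots\le x_{n-1}<2\}$. *)

theory Defs
  imports "HOL-Analysis.Analysis"
begin

text \<open>Points of R^m are represented as functions nat => real that vanish outside {0..<m};
  coordinate x_(i+1) of the paper is x i.\<close>

definition lattice_M :: "nat \<Rightarrow> real \<Rightarrow> (nat \<Rightarrow> real) set" where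
  "lattice_M m \<delta> = {x. \<exists>z :: nat \<Rightarrow> int. (\<forall>i. i \<ge> m \<longrightarrow> z i = 0) \<and>
      (\<forall>i. x i = (if i < m then -2 + \<delta> * real_of_int (z i) else 0))}"

definition I_prime :: "nat \<Rightarrow> (nat \<Rightarrow> real) set" where
  "I_prime m = {x. (\<forall>i. i \<ge> m \<longrightarrow> x i = 0) \<and>
      (\<forall>i. i < m \<longrightarrow> -2 \<le> x i \<and> x i < 2) \<and>
      (\<forall>i j. i \<le> j \<longrightarrow> j < m \<longrightarrow> x i \<le> x j)}"

definition c6 :: real where "c6 = sqrt 3 / 8"
definition c7 :: real where "c7 = (1 + sqrt 3 / 162) ^ 3"

end

theory Submission imports Defs begin

text \<open>Writing a point of \<open>M \<inter> I'\<^sub>m\<close> as \<open>-2 + \<delta> z\<^sub>i\<close> identifies it with a nondecreasing integer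
  sequence \<open>0 \<le> z\<^sub>1 \<le> \<dots> \<le> z\<^sub>m \<le> K = \<lfloor>4/\<delta>\<rfloor>\<close>; the shift \<open>z\<^sub>i \<mapsto> z\<^sub>i + i\<close> makes it strictly
  increasing, i.e. an \<open>m\<close>-subset of an interval of \<open>K + m\<close> integers. Hence the count is at most
  \<open>binom(K+m, m) = (K+1)\<cdots>(K+m)/m! \<le> (4/\<delta>)\<^sup>m \<Prod>\<^sub>j (1 + j\<delta>/4) / m!\<close>, and the smallness of \<open>\<delta>\<close>
  bounds the last product by \<open>c\<^sub>7\<close>.\<close>

definition bounded_mono_seqs :: "nat \<Rightarrow> nat \<Rightarrow> (nat \<Rightarrow> nat) set" where
  "bounded_mono_seqs m K = {z. (\<forall>i\<ge>m. z i = 0) \<and> (\<forall>i<m. z i \<le> K) \<and>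
      (\<forall>i j. i \<le> j \<longrightarrow> j < m \<longrightarrow> z i \<le> z j)}"

lemma sorted_wrt_shift_bounded_mono_seq:
  assumes "z \<in> bounded_mono_seqs m K"
  shows "sorted_wrt (<) (map (\<lambda>i. z i + i) [0..<m])"
  using assms by (auto simp: sorted_wrt_iff_nth_less bounded_mono_seqs_def intro: add_le_less_mono)

lemma inj_on_shift_bounded_mono_seqs:
  "inj_on (\<lambda>z. set (map (\<lambda>i. z i + i) [0..<m])) (bounded_mono_seqs m K)"
proof (rule inj_onI)
  fix z w
  assume z: "z \<in> bounded_mono_seqs m K" and w: "w \<in> bounded_mono_seqs m K"
    and "set (map (\<lambda>i. z i + i) [0..<m]) = set (map (\<lambda>i. w i + i) [0..<m])"
  then have "map (\<lambda>i. z i + i) [0..<m] = map (\<lambda>i. w i + i) [0..<m]"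
    by (intro strict_sorted_equal sorted_wrt_shift_bounded_mono_seq)
  then have "z i = w i" if "i < m" for i
    using that by (auto simp: map_eq_conv)
  moreover have "z i = w i" if "m \<le> i" for i
    using that z w by (simp add: bounded_mono_seqs_def)
  ultimately show "z = w" by (metis ext not_le)
qed

lemma shift_bounded_mono_seqs_subset:
  "(\<lambda>z. set (map (\<lambda>i. z i + i) [0..<m])) ` bounded_mono_seqs m K
     \<subseteq> {A. A \<subseteq> {..<K + m} \<and> card A = m}"
proof safe
  fix z assume z: "z \<in> bounded_mono_seqs m K"
  then have "distinct (map (\<lambda>i. z i + i) [0..<m])"
    using sorted_wrt_shift_bounded_mono_seq strict_sorted_iff by blast
  then show "card (set (map (\<lambda>i. z i + i) [0..<m])) = m"
    by (metis distinct_card length_map length_upt diff_zero)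
  show "x < K + m" if "x \<in> set (map (\<lambda>i. z i + i) [0..<m])" for x
    using that z by (force simp: bounded_mono_seqs_def)
qed

lemma finite_bounded_mono_seqs: "finite (bounded_mono_seqs m K)"
proof (rule finite_imageD[OF _ inj_on_shift_bounded_mono_seqs])
  show "finite ((\<lambda>z. set (map (\<lambda>i. z i + i) [0..<m])) ` bounded_mono_seqs m K)"
    by (rule finite_subset[OF shift_bounded_mono_seqs_subset]) simp
qed

lemma card_bounded_mono_seqs_le: "card (bounded_mono_seqs m K) \<le> (K + m) choose m"
proof -
  have "card (bounded_mono_seqs m K) \<le> card {A. A \<subseteq> {..<K + m} \<and> card A = m}"
    by (rule card_inj_on_le[OF inj_on_shift_bounded_mono_seqs shift_bounded_mono_seqs_subset])
      simp
  also have "\<dots> = (K + m) choose m"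
    using n_subsets[of "{..<K + m}" m] by simp
  finally show ?thesis .
qed

definition grid_index :: "nat \<Rightarrow> real \<Rightarrow> (nat \<Rightarrow> real) \<Rightarrow> nat \<Rightarrow> nat" where
  "grid_index m \<delta> x i = (if i < m then nat \<lfloor>(x i + 2) / \<delta>\<rfloor> else 0)"

lemma grid_index_lattice_M_I_prime:
  assumes "\<delta> > 0" and "x \<in> lattice_M m \<delta> \<inter> I_prime m" and "i < m"
  shows "x i = -2 + \<delta> * grid_index m \<delta> x i" and "grid_index m \<delta> x i \<le> nat \<lfloor>4 / \<delta>\<rfloor>"
proof -
  obtain z where z: "x i = -2 + \<delta> * real_of_int (z i)"
    using assms(2,3) by (force simp: lattice_M_def)
  have "-2 \<le> x i" "x i < 2"
    using assms(2,3) by (auto simp: I_prime_def)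
  then have "0 \<le> z i" "z i < 4 / \<delta>"
    using assms(1) z by (auto simp: zero_le_mult_iff field_simps)
  moreover have "grid_index m \<delta> x i = nat (z i)"
    using assms(1,3) by (simp add: grid_index_def z)
  ultimately show "x i = -2 + \<delta> * grid_index m \<delta> x i" "grid_index m \<delta> x i \<le> nat \<lfloor>4 / \<delta>\<rfloor>"
    using z by (auto intro: nat_mono simp: le_floor_iff)
qed

lemma grid_index_in_bounded_mono_seqs:
  assumes "\<delta> > 0" and "x \<in> lattice_M m \<delta> \<inter> I_prime m"
  shows "grid_index m \<delta> x \<in> bounded_mono_seqs m (nat \<lfloor>4 / \<delta>\<rfloor>)"
proof -
  have "grid_index m \<delta> x i \<le> grid_index m \<delta> x j" if "i \<le> j" "j < m" for i j
  proof -
    have "x i \<le> x j" using assms(2) that by (auto simp: I_prime_def)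
    then show ?thesis
      using grid_index_lattice_M_I_prime[OF assms, of i] grid_index_lattice_M_I_prime[OF assms, of j]
        that assms(1) by simp
  qed
  then show ?thesis
    using grid_index_lattice_M_I_prime(2)[OF assms]
    by (auto simp: bounded_mono_seqs_def grid_index_def)
qed

lemma inj_on_grid_index:
  assumes "\<delta> > 0"
  shows "inj_on (grid_index m \<delta>) (lattice_M m \<delta> \<inter> I_prime m)"
proof (rule inj_onI, rule ext)
  fix x y i
  assume x: "x \<in> lattice_M m \<delta> \<inter> I_prime m" and y: "y \<in> lattice_M m \<delta> \<inter> I_prime m"
    and eq: "grid_index m \<delta> x = grid_index m \<delta> y"
  show "x i = y i"
  proof (cases "i < m")
    case True
    then show ?thesis
      using grid_index_lattice_M_I_prime(1)[OF assms x True]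
        grid_index_lattice_M_I_prime(1)[OF assms y True] eq by simp
  next
    case False
    then show ?thesis using x y by (simp add: I_prime_def)
  qed
qed

lemma card_lattice_M_I_prime_le_binomial:
  assumes "\<delta> > 0"
  shows "card (lattice_M m \<delta> \<inter> I_prime m) \<le> (nat \<lfloor>4 / \<delta>\<rfloor> + m) choose m"
proof -
  have "card (lattice_M m \<delta> \<inter> I_prime m) \<le> card (bounded_mono_seqs m (nat \<lfloor>4 / \<delta>\<rfloor>))"
    using grid_index_in_bounded_mono_seqs[OF assms]
    by (intro card_inj_on_le[OF inj_on_grid_index[OF assms] _ finite_bounded_mono_seqs]) blast
  also have "\<dots> \<le> (nat \<lfloor>4 / \<delta>\<rfloor> + m) choose m"
    by (rule card_bounded_mono_seqs_le)
  finally show ?thesis .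
qed

lemma fact_mult_binomial_eq_prod:
  "fact m * real ((K + m) choose m) = (\<Prod>j = 1..m. real K + real j)"
proof -
  have "fact m * real ((K + m) choose m) = pochhammer (real K + 1) m"
    by (simp add: binomial_gbinomial gbinomial_pochhammer')
  also have "\<dots> = (\<Prod>i = 0..<m. real K + real (Suc i))"
    by (simp add: pochhammer_prod add_ac)
  also have "\<dots> = (\<Prod>j = Suc 0..<Suc m. real K + real j)"
    by (rule prod.shift_bounds_Suc_ivl[symmetric])
  also have "{Suc 0..<Suc m} = {1..m}" by auto
  finally show ?thesis .
qed

lemma fact_mult_binomial_le_power_mult_prod:
  fixes L :: real
  assumes "real K \<le> L" and "L > 0"
  shows "fact m * real ((K + m) choose m) \<le> L ^ m * (\<Prod>j = 1..m. 1 + real j / L)"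
proof -
  have "fact m * real ((K + m) choose m) \<le> (\<Prod>j = 1..m. L + real j)"
    unfolding fact_mult_binomial_eq_prod using assms(1) by (intro prod_mono) auto
  also have "\<dots> = (\<Prod>j = 1..m. L * (1 + real j / L))"
    using assms(2) by (intro prod.cong) (auto simp: field_simps)
  also have "\<dots> = L ^ m * (\<Prod>j = 1..m. 1 + real j / L)"
    by (simp add: prod.distrib)
  finally show ?thesis .
qed

lemma one_plus_power_le_inverse:
  fixes y :: real
  assumes "y \<ge> 0" and "m * y < 1"
  shows "(1 + y) ^ m \<le> 1 / (1 - m * y)"
proof (cases "m = 0")
  case False
  then have "y \<le> m * y"
    using mult_right_mono[of 1 "real m" y] assms(1) by simp
  then have "y < 1"
    using assms(2) by linarith
  have "(1 + y) ^ m * (1 - m * y) \<le> (1 + y) ^ m * (1 - y) ^ m"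
    using Bernoulli_inequality[of "- y" m] \<open>y < 1\<close> assms(1) by (intro mult_left_mono) auto
  also have "\<dots> = (1 - y * y) ^ m"
    by (simp add: power_mult_distrib[symmetric] algebra_simps)
  also have "\<dots> \<le> 1"
    using \<open>y < 1\<close> assms(1) by (intro power_le_one) (auto simp: mult_le_one)
  finally show ?thesis
    using assms(2) by (simp add: field_simps)
qed simp

lemma prod_one_plus_le_power:
  fixes a :: real
  assumes "a \<ge> 0"
  shows "(\<Prod>j = 1..m. 1 + real j * a) \<le> (1 + real m * a) ^ m"
proof -
  have "(\<Prod>j = 1..m. 1 + real j * a) \<le> (\<Prod>j = 1..m. 1 + real m * a)"
    using assms by (intro prod_mono) (auto intro: mult_right_mono)
  then show ?thesis by simp
qed

lemma cube_le_six_power: "m \<ge> 3 \<Longrightarrow> 48 * m ^ 3 \<le> (6::nat) ^ (m + 1)"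
proof (induction m rule: dec_induct)
  case base
  show ?case by simp
next
  case (step m)
  have "(2 * (m + 1)) ^ 3 \<le> (3 * m) ^ 3"
    using step(1) by (intro power_mono) auto
  then have "8 * (m + 1) ^ 3 \<le> 27 * m ^ 3"
    by (simp only: power_mult_distrib) simp
  then have "48 * (m + 1) ^ 3 \<le> 6 * (48 * m ^ 3)" by linarith
  also have "\<dots> \<le> 6 ^ (Suc m + 1)" using step(3) by simp
  finally show ?case by simp
qed

lemma c7_ge: "1 + sqrt 3 / 54 \<le> c7"
proof -
  have "1 + 3 * t \<le> (1 + t) ^ 3" if "t \<ge> 0" for t :: real
    using that by (simp add: power3_eq_cube algebra_simps)
  from this[of "sqrt 3 / 162"] show ?thesis by (simp add: c7_def)
qed

lemma sqrt3_ge: "sqrt 3 \<ge> (1.7::real)"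
  by (rule real_le_rsqrt) (simp add: power2_eq_square)

lemma prod_one_plus_le_40_39:
  fixes a :: real
  assumes "m \<ge> 3" and "a > 0" and "a \<le> 2 * real m / (6 ^ (m + 1) * sqrt 3)"
  shows "(\<Prod>j = 1..m. 1 + real j * a) \<le> 40 / 39"
proof -
  have "real (48 * m ^ 3) \<le> real (6 ^ (m + 1))"
    using assms(1) by (simp only: of_nat_le_iff cube_le_six_power)
  then have six: "48 * real m ^ 3 \<le> 6 ^ (m + 1)" by simp
  have "real m * (real m * a) = real m ^ 2 * a"
    by (simp add: power2_eq_square)
  also have "\<dots> \<le> real m ^ 2 * (2 * real m / (6 ^ (m + 1) * sqrt 3))"
    using assms(3) by (intro mult_left_mono) auto
  also have "\<dots> = (48 * real m ^ 3 / 6 ^ (m + 1)) / (24 * sqrt 3)"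
    by (simp add: power2_eq_square power3_eq_cube)
  also have "\<dots> \<le> 1 / (24 * sqrt 3)"
    using six by (intro divide_right_mono) auto
  also have "\<dots> \<le> 1 / 40"
    using sqrt3_ge by (simp add: field_simps)
  finally have small: "real m * (real m * a) \<le> 1 / 40" .
  have "(\<Prod>j = 1..m. 1 + real j * a) \<le> (1 + real m * a) ^ m"
    using assms(2) by (intro prod_one_plus_le_power) simp
  also have "\<dots> \<le> 1 / (1 - real m * (real m * a))"
    using small assms(2) by (intro one_plus_power_le_inverse) auto
  also have "\<dots> \<le> 1 / (1 - 1 / 40)"
    using small by (intro divide_left_mono) auto
  finally show ?thesis by simp
qed

lemma prod_one_plus_le_c7:
  fixes a :: real
  assumes "m \<ge> 1" and "a > 0" and "a \<le> 2 * real m / (6 ^ (m + 1) * sqrt 3)"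
  shows "(\<Prod>j = 1..m. 1 + real j * a) \<le> c7"
proof -
  define s where "s = sqrt (3::real)"
  have s: "s > 0" "s * s = 3" "s \<ge> 1.7"
    using sqrt3_ge by (auto simp: s_def)
  have a: "a \<le> 2 * real m / (6 ^ (m + 1) * s)"
    using assms(3) by (simp add: s_def)
  have c7: "1 + s / 54 \<le> c7"
    using c7_ge by (simp add: s_def)
  consider "m = 1" | "m = 2" | "m \<ge> 3" using assms(1) by linarith
  then show ?thesis
  proof cases
    case 1
    have "a \<le> 2 / (36 * s)" using a 1 by simp
    also have "\<dots> = s / 54" using s by (simp add: field_simps)
    finally show ?thesis using 1 c7 by simp
  next
    case 2
    define t where "t = s / 162"
    \<comment> \<open>\<open>t\<close> is the largest admissible \<open>a\<close> for \<open>m = 2\<close>, and \<open>c\<^sub>7 = (1 + t)\<^sup>3\<close>\<close>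
    have "a \<le> 4 / (216 * s)" using a 2 by simp
    also have "\<dots> = t" using s by (simp add: t_def field_simps)
    finally have "a \<le> t" .
    have "{1..m} = {1, 2}" using 2 by auto
    then have "(\<Prod>j = 1..m. 1 + real j * a) = (1 + a) * (1 + 2 * a)" by simp
    also have "\<dots> \<le> (1 + t) * (1 + 2 * t)"
      using \<open>a \<le> t\<close> assms(2) by (intro mult_mono) auto
    also have "\<dots> \<le> (1 + t) * (1 + 2 * t) + (1 + t) * t\<^sup>2"
      using s by (simp add: t_def)
    also have "\<dots> = (1 + t) ^ 3"
      by (simp add: power3_eq_cube power2_eq_square algebra_simps)
    also have "\<dots> = c7"
      by (simp add: c7_def t_def s_def)
    finally show ?thesis .
  next
    case 3
    have "(\<Prod>j = 1..m. 1 + real j * a) \<le> 40 / 39"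
      using prod_one_plus_le_40_39[OF 3 assms(2,3)] .
    also have "\<dots> \<le> 1 + s / 54"
      using s by simp
    finally show ?thesis using c7 by simp
  qed
qed

theorem lemma2p3p2:
  fixes n :: nat and \<delta> :: real
  assumes "n > 1" and "\<delta> > 0"
    and "\<delta> \<le> real (n - 1) * 6 powi (- int n) / c6"
  shows "real (card (lattice_M (n - 1) \<delta> \<inter> I_prime (n - 1)))
           \<le> c7 * 4 ^ (n - 1) / (fact (n - 1) * \<delta> ^ (n - 1))"
proof -
  define m where "m = n - 1"
  define K where "K = nat \<lfloor>4 / \<delta>\<rfloor>"
  have n: "n = m + 1" and "m \<ge> 1"
    using assms(1) by (auto simp: m_def)
  have "\<delta> \<le> real m * inverse (6 ^ n) / c6"
    using assms(3) by (simp only: m_def power_int_minus power_int_of_nat)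
  then have "\<delta> / 4 \<le> 2 * real m / (6 ^ (m + 1) * sqrt 3)"
    unfolding n by (simp add: c6_def field_simps)
  then have prod: "(\<Prod>j = 1..m. 1 + real j / (4 / \<delta>)) \<le> c7"
    using prod_one_plus_le_c7[OF \<open>m \<ge> 1\<close>, of "\<delta> / 4"] assms(2) by simp
  have "fact m * real ((K + m) choose m) \<le> (4 / \<delta>) ^ m * (\<Prod>j = 1..m. 1 + real j / (4 / \<delta>))"
    using assms(2) by (intro fact_mult_binomial_le_power_mult_prod) (simp_all add: K_def)
  also have "\<dots> \<le> (4 / \<delta>) ^ m * c7"
    using prod assms(2) by (intro mult_left_mono) simp_all
  finally have binomial: "fact m * real ((K + m) choose m) \<le> (4 / \<delta>) ^ m * c7" .
  have "real (card (lattice_M m \<delta> \<inter> I_prime m)) \<le> real ((K + m) choose m)"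
    unfolding K_def using card_lattice_M_I_prime_le_binomial[OF assms(2)] by simp
  also have "\<dots> \<le> c7 * 4 ^ m / (fact m * \<delta> ^ m)"
    using binomial assms(2) by (simp add: power_divide field_simps fact_gt_zero)
  finally show ?thesis by (simp add: m_def)
qed

end
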